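(* Let $0<q<1$, $\beta\in\mathbb{C}$ and $n\ge 0$ an integer, and set $a=q^{-n/2+1/4}\beta$. Let $\tau$ be the divided difference operator acting on polynomials in $x=(z+z^{-1})/2$ by $$(\tau f)(z)=\frac{f(q^{1/2}z)-f(q^{-1/2}z)}{z-z^{-1}} .$$ Then $$\sum_{k=0}^\infty\frac{q^{k^2/4}\beta^k}{(q;q)_k}\,\tau^k\,H_n(x|q)=H_n(x;a|q),$$ where the sum is finite since $\tau$ lowers polynomial degree in $x$.
   Context: $(a;q)_0=1$, $(a;q)_k=\prod_{j=0}^{k-1}(1-aq^j)$, $\begin{bmatrix} n\\ k\end{bmatrix}_q=\frac{(q;q)_n}{(q;q)_k(q;q)_{n-k}}$. With $x=\cos\theta$, $z=e^{i\theta}$, the continuous $q$-Hermite polynomials are $H_n(x|q)=\sum_{k=0}^n\begin{bmatrix} n\\ k\end{bmatrix}_q e^{i(n-2k)\theta}$, and the continuous big $q$-Hermite polynomials are $$H_n(x;a|q)=e^{in\theta}\,{}_2\phi_0\big(q^{-n},ae^{i\theta};-;q;q^ne^{-2i\theta}\big)=e^{in\theta}\sum_{k=0}^n\frac{(q^{-n};q)_k(ae^{i\theta};q)_k}{(q;q)_k}(-1)^kq^{-k(k-1)/2}\big(q^ne^{-2i\theta}\big)^k .$$ *)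

theory Defs
  imports Complex_Main
begin

definition qpoch :: "complex \<Rightarrow> complex \<Rightarrow> nat \<Rightarrow> complex" where
  "qpoch a q k = (\<Prod>j<k. (1 - a * q ^ j))"

definition qbinom :: "complex \<Rightarrow> nat \<Rightarrow> nat \<Rightarrow> complex" where
  "qbinom q n k = qpoch q q n / (qpoch q q k * qpoch q q (n - k))"

text \<open>Continuous q-Hermite polynomial H_n(x|q), written as a Laurent polynomial
  in z = e^{i theta}, x = (z + z^{-1})/2.\<close>
definition Hcont :: "nat \<Rightarrow> real \<Rightarrow> complex \<Rightarrow> complex" where
  "Hcont n q z = (\<Sum>k=0..n. qbinom (complex_of_real q) n k * z powi (int n - 2 * int k))"

text \<open>Continuous big q-Hermite polynomial H_n(x;a|q) via its 2phi0 representation.\<close>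
definition Hbig :: "nat \<Rightarrow> complex \<Rightarrow> real \<Rightarrow> complex \<Rightarrow> complex" where
  "Hbig n a q z = z ^ n * (\<Sum>k=0..n.
      qpoch (inverse (complex_of_real q ^ n)) (complex_of_real q) k
      * qpoch (a * z) (complex_of_real q) k / qpoch (complex_of_real q) (complex_of_real q) k
      * (-1) ^ k * inverse (complex_of_real q ^ (k * (k - 1) div 2))
      * (complex_of_real q ^ n * inverse (z ^ 2)) ^ k)"

definition tau :: "real \<Rightarrow> (complex \<Rightarrow> complex) \<Rightarrow> complex \<Rightarrow> complex" where
  "tau q f z = (f (complex_of_real (sqrt q) * z) - f (z / complex_of_real (sqrt q))) / (z - inverse z)"

end

(* With z = e^(i theta) and t = z^(-2) one has H_n(x|q) = z^n h_n(t), where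
   h_n(t) = sum_k [n,k]_q t^k is the Rogers-Szego polynomial.  Its q-difference equation
   q^n h_n(t/q) - h_n(q t) = (q^n - 1) (1 - t) h_(n-1)(t) says precisely that
   tau H_n = (q^(n/2) - q^(-n/2)) H_(n-1), so tau^k H_n is an explicit multiple of H_(n-k)
   that vanishes for k > n.  On the other side, expanding (a z; q)_k in the 2phi0 by the
   finite q-binomial theorem and resumming gives the connection formula
   H_n(x;a|q) = sum_k [n,k]_q (-a)^k q^(k(k-1)/2) H_(n-k)(x|q).  Comparing coefficients
   leaves an identity between powers of q. *)

theory Submission
  imports Defs
begin

lemma qpoch_0 [simp]: "qpoch a x 0 = 1"
  by (simp add: qpoch_def)

lemma qpoch_Suc: "qpoch a x (Suc k) = qpoch a x k * (1 - a * x ^ k)"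
  by (simp add: qpoch_def)

lemma one_minus_power_Suc_nonzero:
  fixes x :: complex
  assumes "norm x < 1"
  shows "1 - x ^ Suc j \<noteq> 0"
proof
  assume "1 - x ^ Suc j = 0"
  then have "norm (x ^ Suc j) = 1" by simp
  moreover have "norm (x ^ Suc j) < 1"
    using assms by (simp only: norm_power power_less_one_iff norm_ge_zero) simp
  ultimately show False by simp
qed

lemma qpoch_self_nonzero:
  assumes "norm x < 1"
  shows "qpoch x x k \<noteq> 0"
  using one_minus_power_Suc_nonzero[OF assms] by (simp add: qpoch_def)

(* Unlike qbinom, whose truncated subtraction makes it nonzero for k > n, this polynomial
   version (defined by the q-Pascal rule) vanishes for k > n and needs no q-Pochhammer
   symbol to be invertible. *)
fun gauss_binom :: "complex \<Rightarrow> nat \<Rightarrow> nat \<Rightarrow> complex" where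
  "gauss_binom x 0 k = (if k = 0 then 1 else 0)"
| "gauss_binom x (Suc n) 0 = 1"
| "gauss_binom x (Suc n) (Suc k) = gauss_binom x n (Suc k) + x ^ (n - k) * gauss_binom x n k"

lemma gauss_binom_0_right [simp]: "gauss_binom x n 0 = 1"
  by (cases n) simp_all

lemma gauss_binom_eq_0: "n < k \<Longrightarrow> gauss_binom x n k = 0"
proof (induction n arbitrary: k)
  case (Suc n)
  then show ?case by (cases k) auto
qed simp

lemma gauss_binom_qpoch:
  "k \<le> n \<Longrightarrow> gauss_binom x n k * qpoch x x k * qpoch x x (n - k) = qpoch x x n"
proof (induction n arbitrary: k)
  case (Suc n)
  show ?case
  proof (cases k)
    case (Suc k')
    with Suc.prems have "k' \<le> n" by simp
    have left: "gauss_binom x n (Suc k') * qpoch x x (Suc k') * qpoch x x (n - k')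
        = (1 - x ^ (n - k')) * qpoch x x n"
    proof (cases "k' = n")
      case False
      with \<open>k' \<le> n\<close> have "Suc k' \<le> n" and n_minus: "n - k' = Suc (n - Suc k')"
        by simp_all
      have "gauss_binom x n (Suc k') * qpoch x x (Suc k') * qpoch x x (n - k')
          = (1 - x ^ (n - k')) * (gauss_binom x n (Suc k') * qpoch x x (Suc k') * qpoch x x (n - Suc k'))"
        unfolding n_minus by (simp add: qpoch_Suc algebra_simps)
      then show ?thesis
        using Suc.IH[OF \<open>Suc k' \<le> n\<close>] by simp
    qed (simp add: gauss_binom_eq_0)
    have right: "x ^ (n - k') * gauss_binom x n k' * qpoch x x (Suc k') * qpoch x x (n - k')
        = x ^ (n - k') * (1 - x ^ Suc k') * qpoch x x n"
      unfolding Suc.IH[OF \<open>k' \<le> n\<close>, symmetric] by (simp add: qpoch_Suc algebra_simps)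
    have "gauss_binom x (Suc n) k * qpoch x x k * qpoch x x (Suc n - k)
        = gauss_binom x n (Suc k') * qpoch x x (Suc k') * qpoch x x (n - k')
          + x ^ (n - k') * gauss_binom x n k' * qpoch x x (Suc k') * qpoch x x (n - k')"
      by (simp add: Suc algebra_simps)
    also have "\<dots> = qpoch x x n * (1 - x ^ (n - k') * x ^ Suc k')"
      unfolding left right by (simp add: algebra_simps)
    also have "x ^ (n - k') * x ^ Suc k' = x ^ Suc n"
      using \<open>k' \<le> n\<close> by (simp flip: power_add)
    finally show ?thesis
      by (simp add: qpoch_Suc)
  qed simp
qed simp

lemma gauss_binom_eq_quotient:
  assumes "norm x < 1" "k \<le> n"
  shows "gauss_binom x n k = qpoch x x n / (qpoch x x k * qpoch x x (n - k))"
  using gauss_binom_qpoch[OF assms(2), of x] qpoch_self_nonzero[OF assms(1)]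
  by (simp add: field_simps)

lemma triangle_number_Suc: "Suc k * (Suc k - 1) div 2 = k * (k - 1) div 2 + k"
  by (simp only: choose_two[symmetric]) (simp add: numeral_2_eq_2)

lemma qpoch_eq_sum_gauss_binom:
  "qpoch a x k = (\<Sum>j\<le>k. gauss_binom x k j * (-a) ^ j * x ^ (j * (j - 1) div 2))"
proof (induction k)
  case (Suc k)
  define t where "t j = gauss_binom x k j * (-a) ^ j * x ^ (j * (j - 1) div 2)" for j
  have "(\<Sum>j\<le>Suc k. gauss_binom x (Suc k) j * (-a) ^ j * x ^ (j * (j - 1) div 2))
      = 1 + (\<Sum>j\<le>k. t (Suc j) + (-a * x ^ k) * t j)"
  proof -
    have "gauss_binom x (Suc k) (Suc j) * (-a) ^ Suc j * x ^ (Suc j * (Suc j - 1) div 2)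
        = t (Suc j) + (-a * x ^ k) * t j" if "j \<le> k" for j
    proof -
      have "x ^ k = x ^ (k - j) * x ^ j" using that by (simp flip: power_add)
      then show ?thesis unfolding t_def triangle_number_Suc by (simp add: power_add algebra_simps)
    qed
    then show ?thesis unfolding sum.atMost_Suc_shift by simp
  qed
  also have "\<dots> = (t 0 + (\<Sum>j\<le>k. t (Suc j))) + (-a * x ^ k) * (\<Sum>j\<le>k. t j)"
    by (simp only: sum.distrib sum_distrib_left add.assoc t_def[of 0] gauss_binom_0_right) simp
  also have "t 0 + (\<Sum>j\<le>k. t (Suc j)) = (\<Sum>j\<le>Suc k. t j)"
    by (rule sum.atMost_Suc_shift[symmetric])
  also have "\<dots> = (\<Sum>j\<le>k. t j)"
    by (simp add: t_def gauss_binom_eq_0)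
  finally show ?case
    unfolding qpoch_Suc Suc.IH t_def by (simp add: algebra_simps)
qed simp

lemma prod_one_minus_power_qpoch:
  "k \<le> n \<Longrightarrow> (\<Prod>j<k. 1 - x ^ (n - j)) * qpoch x x (n - k) = qpoch x x n"
proof (induction k)
  case (Suc k)
  then have "n - k = Suc (n - Suc k)" by simp
  then have "qpoch x x (n - k) = qpoch x x (n - Suc k) * (1 - x ^ (n - k))"
    by (simp add: qpoch_Suc)
  with Suc show ?case by (simp add: ac_simps)
qed simp

lemma prod_one_minus_power_eq_gauss_binom:
  assumes "norm x < 1" "k \<le> n"
  shows "(\<Prod>j<k. 1 - x ^ (n - j)) = gauss_binom x n k * qpoch x x k"
  using prod_one_minus_power_qpoch[OF assms(2), of x] gauss_binom_qpoch[OF assms(2), of x]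
    qpoch_self_nonzero[OF assms(1), of "n - k"]
  by (metis mult_right_cancel)

lemma qpoch_inverse_power:
  fixes x :: complex
  assumes "x \<noteq> 0" "k \<le> n"
  shows "qpoch (inverse (x ^ n)) x k * (-1) ^ k * inverse (x ^ (k * (k - 1) div 2)) * (x ^ n) ^ k
       = (\<Prod>j<k. 1 - x ^ (n - j))"
  using assms(2)
proof (induction k)
  case (Suc k)
  have "x ^ n = x ^ (n - k) * x ^ k" using Suc.prems by (simp flip: power_add)
  then have factor: "(1 - inverse (x ^ n) * x ^ k) * (-1) * inverse (x ^ k) * x ^ n = 1 - x ^ (n - k)"
    using assms(1) by (simp add: field_simps)
  have "qpoch (inverse (x ^ n)) x (Suc k) * (-1) ^ Suc k * inverse (x ^ (Suc k * (Suc k - 1) div 2))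
        * (x ^ n) ^ Suc k
      = (qpoch (inverse (x ^ n)) x k * (-1) ^ k * inverse (x ^ (k * (k - 1) div 2)) * (x ^ n) ^ k)
        * ((1 - inverse (x ^ n) * x ^ k) * (-1) * inverse (x ^ k) * x ^ n)"
    unfolding triangle_number_Suc qpoch_Suc by (simp add: power_add algebra_simps)
  then show ?case
    unfolding factor using Suc by simp
qed simp

lemma gauss_binom_mult_gauss_binom:
  assumes "norm x < 1" "i + l \<le> n"
  shows "gauss_binom x n (i + l) * gauss_binom x (i + l) i = gauss_binom x n i * gauss_binom x (n - i) l"
proof -
  have "i + l - i = l" "n - i - l = n - (i + l)" by auto
  with assms show ?thesis
    using qpoch_self_nonzero[OF assms(1)]
    by (simp add: gauss_binom_eq_quotient field_simps)
qed

lemma gauss_binom_absorption: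
  assumes "norm x < 1" "k \<le> p"
  shows "gauss_binom x p k * (1 - x ^ Suc p) = gauss_binom x (Suc p) (Suc k) * (1 - x ^ Suc k)"
  using assms qpoch_self_nonzero[OF assms(1)] one_minus_power_Suc_nonzero[OF assms(1)]
  by (simp add: gauss_binom_eq_quotient qpoch_Suc field_simps del: gauss_binom.simps)

lemma gauss_binom_Suc_q_difference:
  assumes "norm x < 1" "k \<le> p"
  shows "gauss_binom x (Suc p) (Suc k) * (x ^ (p - k) - x ^ Suc k)
       = (x ^ Suc p - 1) * (gauss_binom x p (Suc k) - gauss_binom x p k)"
proof -
  let ?G = "gauss_binom x (Suc p) (Suc k)" and ?A = "gauss_binom x p (Suc k)"
    and ?B = "gauss_binom x p k"
  note absorb = gauss_binom_absorption[OF assms]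
  have "x ^ (p - k) * x ^ Suc k = x ^ Suc p"
    using assms(2) by (simp flip: power_add)
  then have shifted: "x ^ (p - k) * (?G * (1 - x ^ Suc k)) = ?G * (x ^ (p - k) - x ^ Suc p)"
    by (metis mult.left_commute right_diff_distrib mult.right_neutral)
  have "?G * (1 - x ^ Suc p) = ?A * (1 - x ^ Suc p) + x ^ (p - k) * (?B * (1 - x ^ Suc p))"
    by (simp add: algebra_simps)
  also have "\<dots> = ?A * (1 - x ^ Suc p) + ?G * (x ^ (p - k) - x ^ Suc p)"
    unfolding absorb shifted ..
  finally have absorb': "?A * (1 - x ^ Suc p) = ?G * (1 - x ^ (p - k))"
    by (simp add: algebra_simps del: gauss_binom.simps)
  have "(x ^ Suc p - 1) * (?A - ?B) = ?B * (1 - x ^ Suc p) - ?A * (1 - x ^ Suc p)"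
    by (simp add: algebra_simps del: gauss_binom.simps)
  also have "\<dots> = ?G * (x ^ (p - k) - x ^ Suc k)"
    unfolding absorb absorb' by (simp add: algebra_simps del: gauss_binom.simps)
  finally show ?thesis ..
qed

definition rogers_szego :: "complex \<Rightarrow> nat \<Rightarrow> complex \<Rightarrow> complex" where
  "rogers_szego x n t = (\<Sum>k\<le>n. gauss_binom x n k * t ^ k)"

lemma rogers_szego_q_difference:
  assumes "norm x < 1" "x \<noteq> 0"
  shows "x ^ Suc p * rogers_szego x (Suc p) (t / x) - rogers_szego x (Suc p) (x * t)
       = (x ^ Suc p - 1) * (1 - t) * rogers_szego x p t"
proof -
  let ?c = "\<lambda>k. gauss_binom x p (Suc k) - gauss_binom x p k"
  have "x ^ Suc p * rogers_szego x (Suc p) (t / x) - rogers_szego x (Suc p) (x * t)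
      = (\<Sum>k\<le>Suc p. gauss_binom x (Suc p) k * (x ^ (Suc p - k) - x ^ k) * t ^ k)"
    unfolding rogers_szego_def sum_distrib_left sum_subtractf[symmetric]
  proof (rule sum.cong[OF refl])
    fix k assume "k \<in> {..Suc p}"
    then have "x ^ Suc p = x ^ (Suc p - k) * x ^ k" by (simp flip: power_add)
    then show "x ^ Suc p * (gauss_binom x (Suc p) k * (t / x) ^ k)
        - gauss_binom x (Suc p) k * (x * t) ^ k
        = gauss_binom x (Suc p) k * (x ^ (Suc p - k) - x ^ k) * t ^ k"
      using assms(2) by (simp add: power_divide power_mult_distrib field_simps)
  qed
  also have "\<dots> = (x ^ Suc p - 1)
      + (\<Sum>k\<le>p. gauss_binom x (Suc p) (Suc k) * (x ^ (p - k) - x ^ Suc k) * t ^ Suc k)"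
    unfolding sum.atMost_Suc_shift by (simp del: gauss_binom.simps)
  also have "(\<Sum>k\<le>p. gauss_binom x (Suc p) (Suc k) * (x ^ (p - k) - x ^ Suc k) * t ^ Suc k)
      = (\<Sum>k\<le>p. (x ^ Suc p - 1) * (?c k * t ^ Suc k))"
    by (intro sum.cong refl) (simp only: atMost_iff gauss_binom_Suc_q_difference[OF assms(1)] mult.assoc)
  also have "(x ^ Suc p - 1) + \<dots> = (x ^ Suc p - 1) * (1 + (\<Sum>k\<le>p. ?c k * t ^ Suc k))"
    by (simp add: sum_distrib_left algebra_simps del: gauss_binom.simps)
  also have "1 + (\<Sum>k\<le>p. ?c k * t ^ Suc k) = (1 - t) * rogers_szego x p t"
  proof -
    have "1 + (\<Sum>k\<le>p. gauss_binom x p (Suc k) * t ^ Suc k) = rogers_szego x p t"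
      using sum.atMost_Suc_shift[of "\<lambda>k. gauss_binom x p k * t ^ k" p]
      by (simp add: rogers_szego_def gauss_binom_eq_0)
    then show ?thesis
      by (simp add: rogers_szego_def sum_subtractf left_diff_distrib sum_distrib_left algebra_simps)
  qed
  finally show ?thesis by (simp only: mult.assoc)
qed

lemma rogers_szego_qpoch_expansion:
  assumes "norm x < 1"
  shows "(\<Sum>k\<le>n. gauss_binom x n k * qpoch b x k * t ^ k)
       = (\<Sum>j\<le>n. gauss_binom x n j * (-b * t) ^ j * x ^ (j * (j - 1) div 2)
                    * rogers_szego x (n - j) t)"
proof -
  define F where "F i l = gauss_binom x n (i + l) * gauss_binom x (i + l) i
      * (-b) ^ i * x ^ (i * (i - 1) div 2) * t ^ (i + l)" for i l
  have "(\<Sum>k\<le>n. gauss_binom x n k * qpoch b x k * t ^ k) = (\<Sum>k\<le>n. \<Sum>i\<le>k. F i (k - i))"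
    unfolding qpoch_eq_sum_gauss_binom sum_distrib_left sum_distrib_right
    by (intro sum.cong refl) (simp add: F_def algebra_simps)
  also have "\<dots> = (\<Sum>(i, l)\<in>{(i, l). i + l \<le> n}. F i l)"
    by (rule sum.triangle_reindex_eq[symmetric])
  also have "{(i, l). i + l \<le> n} = Sigma {..n} (\<lambda>i. {..n - i})"
    by auto
  also have "(\<Sum>(i, l)\<in>Sigma {..n} (\<lambda>i. {..n - i}). F i l) = (\<Sum>i\<le>n. \<Sum>l\<le>n - i. F i l)"
    by (rule sum.Sigma[symmetric]) auto
  also have "\<dots> = (\<Sum>j\<le>n. gauss_binom x n j * (-b * t) ^ j * x ^ (j * (j - 1) div 2)
                    * rogers_szego x (n - j) t)"
    unfolding rogers_szego_def sum_distrib_left power_mult_distrib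
    using gauss_binom_mult_gauss_binom[OF assms]
    by (intro sum.cong refl) (simp add: F_def power_add power_mult_distrib algebra_simps)
  finally show ?thesis .
qed

lemma Hcont_eq_rogers_szego:
  assumes "0 < q" "q < 1" "z \<noteq> 0"
  shows "Hcont n q z = z ^ n * rogers_szego (complex_of_real q) n (inverse (z ^ 2))"
  unfolding Hcont_def rogers_szego_def atLeast0AtMost sum_distrib_left
proof (intro sum.cong refl)
  fix k assume "k \<in> {..n}"
  have "z powi (int n - int (2 * k)) = z powi int n / z powi int (2 * k)"
    using assms(3) by (rule power_int_diff[OF disjI1])
  then have "z powi (int n - int (2 * k)) = z ^ n / z ^ (2 * k)"
    by (simp only: power_int_of_nat)
  then have "z powi (int n - 2 * int k) = z ^ n / z ^ (2 * k)"
    by simp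
  then show "qbinom (complex_of_real q) n k * z powi (int n - 2 * int k)
      = z ^ n * (gauss_binom (complex_of_real q) n k * inverse (z ^ 2) ^ k)"
    using \<open>k \<in> {..n}\<close> assms
    by (simp add: qbinom_def gauss_binom_eq_quotient power_mult divide_inverse power_inverse)
qed

lemma Hbig_eq_sum:
  assumes "0 < q" "q < 1" "z \<noteq> 0"
  defines "Q \<equiv> complex_of_real q"
  shows "Hbig n a q z = z ^ n * (\<Sum>k\<le>n. gauss_binom Q n k * qpoch (a * z) Q k * inverse (z ^ 2) ^ k)"
  unfolding Hbig_def atLeast0AtMost Q_def[symmetric]
proof (intro arg_cong[where f = "(*) (z ^ n)"] sum.cong refl)
  fix k assume "k \<in> {..n}"
  have "norm Q < 1" "Q \<noteq> 0" using assms by (simp_all add: Q_def)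
  moreover have "k \<le> n" using \<open>k \<in> {..n}\<close> by simp
  ultimately have coeff: "qpoch (inverse (Q ^ n)) Q k * (-1) ^ k * inverse (Q ^ (k * (k - 1) div 2))
      * (Q ^ n) ^ k = gauss_binom Q n k * qpoch Q Q k"
    using qpoch_inverse_power prod_one_minus_power_eq_gauss_binom by metis
  have "qpoch (inverse (Q ^ n)) Q k * qpoch (a * z) Q k / qpoch Q Q k * (-1) ^ k
      * inverse (Q ^ (k * (k - 1) div 2)) * (Q ^ n * inverse (z ^ 2)) ^ k
      = (qpoch (inverse (Q ^ n)) Q k * (-1) ^ k * inverse (Q ^ (k * (k - 1) div 2)) * (Q ^ n) ^ k)
        * qpoch (a * z) Q k / qpoch Q Q k * inverse (z ^ 2) ^ k"
    by (simp only: power_mult_distrib divide_inverse ac_simps)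
  also have "\<dots> = gauss_binom Q n k * qpoch (a * z) Q k * inverse (z ^ 2) ^ k"
    unfolding coeff using qpoch_self_nonzero[OF \<open>norm Q < 1\<close>, of k] by simp
  finally show "qpoch (inverse (Q ^ n)) Q k * qpoch (a * z) Q k / qpoch Q Q k * (-1) ^ k
      * inverse (Q ^ (k * (k - 1) div 2)) * (Q ^ n * inverse (z ^ 2)) ^ k
      = gauss_binom Q n k * qpoch (a * z) Q k * inverse (z ^ 2) ^ k" .
qed

lemma Hbig_eq_sum_Hcont:
  assumes "0 < q" "q < 1" "z \<noteq> 0"
  defines "Q \<equiv> complex_of_real q"
  shows "Hbig n a q z = (\<Sum>j\<le>n. gauss_binom Q n j * (-a) ^ j * Q ^ (j * (j - 1) div 2) * Hcont (n - j) q z)"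
proof -
  have "norm Q < 1" using assms(1,2) by (simp add: Q_def)
  have "Hbig n a q z = (\<Sum>j\<le>n. gauss_binom Q n j * (-(a * z) * inverse (z ^ 2)) ^ j
      * Q ^ (j * (j - 1) div 2) * (z ^ n * rogers_szego Q (n - j) (inverse (z ^ 2))))"
    unfolding Hbig_eq_sum[OF assms(1-3)] Q_def[symmetric] rogers_szego_qpoch_expansion[OF \<open>norm Q < 1\<close>]
    by (simp add: sum_distrib_left algebra_simps)
  also have "\<dots> = (\<Sum>j\<le>n. gauss_binom Q n j * (-a) ^ j * Q ^ (j * (j - 1) div 2) * Hcont (n - j) q z)"
  proof (intro sum.cong refl)
    fix j assume "j \<in> {..n}"
    then have "z ^ n = z ^ j * z ^ (n - j)" by (simp flip: power_add)
    moreover have "-(a * z) * inverse (z ^ 2) = -a * inverse z"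
      using assms(3) by (simp add: power2_eq_square field_simps)
    ultimately have "(-(a * z) * inverse (z ^ 2)) ^ j * z ^ n
        = (-a) ^ j * (inverse z * z) ^ j * z ^ (n - j)"
      by (simp only: power_mult_distrib ac_simps)
    then have "(-(a * z) * inverse (z ^ 2)) ^ j * z ^ n = (-a) ^ j * z ^ (n - j)"
      using assms(3) by simp
    then show "gauss_binom Q n j * (-(a * z) * inverse (z ^ 2)) ^ j * Q ^ (j * (j - 1) div 2)
        * (z ^ n * rogers_szego Q (n - j) (inverse (z ^ 2)))
        = gauss_binom Q n j * (-a) ^ j * Q ^ (j * (j - 1) div 2) * Hcont (n - j) q z"
      unfolding Hcont_eq_rogers_szego[OF assms(1-3)] Q_def by (simp add: algebra_simps)
  qed
  finally show ?thesis .
qed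

lemma Hcont_0 [simp]: "Hcont 0 q z = 1"
  by (simp add: Hcont_def qbinom_def)

lemma diff_inverse_nonzero_if_Im_nonzero:
  fixes z :: complex
  assumes "Im z \<noteq> 0"
  shows "z - inverse z \<noteq> 0"
proof
  assume "z - inverse z = 0"
  moreover have "z \<noteq> 0" using assms by auto
  ultimately have "z\<^sup>2 = 1" by (simp add: power2_eq_square field_simps)
  then have "z = 1 \<or> z = -1" by (simp add: power2_eq_1_iff)
  then show False using assms by auto
qed

lemma Hcont_q_difference:
  assumes "0 < q" "q < 1" "z \<noteq> 0"
  defines "s \<equiv> complex_of_real (sqrt q)"
  shows "Hcont (Suc p) q (s * z) - Hcont (Suc p) q (z / s)
       = (s ^ Suc p - inverse (s ^ Suc p)) * (z - inverse z) * Hcont p q z"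
proof -
  define m where "m = Suc p"
  define Q where "Q = complex_of_real q"
  define u where "u = inverse (z ^ 2)"
  have "s \<noteq> 0" "Q = s ^ 2" "Q \<noteq> 0" "norm Q < 1"
    using assms(1,2) by (simp_all add: s_def Q_def flip: of_real_power)
  then have "s * z \<noteq> 0" "z / s \<noteq> 0" "Q ^ m = s ^ m * s ^ m"
    using \<open>z \<noteq> 0\<close> by (simp_all add: power2_eq_square power_mult_distrib)
  have shifted_args: "inverse ((s * z) ^ 2) = u / Q" "inverse ((z / s) ^ 2) = Q * u"
    using \<open>Q = s ^ 2\<close> by (simp_all add: u_def power_mult_distrib power_divide field_simps)
  have "Hcont m q (s * z) = s ^ m * z ^ m * rogers_szego Q m (u / Q)"
    "Hcont m q (z / s) = z ^ m / s ^ m * rogers_szego Q m (Q * u)"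
    unfolding Hcont_eq_rogers_szego[OF assms(1,2) \<open>s * z \<noteq> 0\<close>]
      Hcont_eq_rogers_szego[OF assms(1,2) \<open>z / s \<noteq> 0\<close>] Q_def[symmetric] shifted_args
    by (simp_all add: power_mult_distrib power_divide)
  then have "Hcont m q (s * z) - Hcont m q (z / s)
      = z ^ m / s ^ m * (Q ^ m * rogers_szego Q m (u / Q) - rogers_szego Q m (Q * u))"
    using \<open>s \<noteq> 0\<close> \<open>Q ^ m = s ^ m * s ^ m\<close> by (simp add: field_simps)
  also have "\<dots> = (Q ^ m - 1) / s ^ m * (z ^ m * (1 - u)) * rogers_szego Q p u"
    unfolding m_def rogers_szego_q_difference[OF \<open>norm Q < 1\<close> \<open>Q \<noteq> 0\<close>]
    by (simp add: divide_inverse ac_simps)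
  also have "(Q ^ m - 1) / s ^ m = s ^ m - inverse (s ^ m)"
    using \<open>s \<noteq> 0\<close> \<open>Q ^ m = s ^ m * s ^ m\<close> by (simp add: field_simps)
  also have "z ^ m * (1 - u) = (z - inverse z) * z ^ p"
    using \<open>z \<noteq> 0\<close> by (simp add: m_def u_def power2_eq_square field_simps)
  finally show ?thesis
    unfolding Hcont_eq_rogers_szego[OF assms(1-3)] Q_def[symmetric] u_def[symmetric] m_def
    by (simp only: ac_simps)
qed

lemma tau_Hcont:
  assumes "0 < q" "q < 1" "Im z \<noteq> 0"
  shows "tau q (Hcont m q) z = complex_of_real (sqrt q ^ m - inverse (sqrt q ^ m)) * Hcont (m - 1) q z"
proof (cases m)
  case (Suc p)
  have "z \<noteq> 0" using assms(3) by auto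
  then show ?thesis
    using Hcont_q_difference[OF assms(1,2) \<open>z \<noteq> 0\<close>, of p] diff_inverse_nonzero_if_Im_nonzero[OF assms(3)]
    by (simp add: tau_def Suc)
qed (simp add: tau_def)

lemma funpow_tau_eigen:
  assumes "q \<noteq> 0"
    and eigen: "\<And>m w. Im w \<noteq> 0 \<Longrightarrow> tau q (f m) w = c m * f (m - 1) w"
    and "Im z \<noteq> 0"
  shows "(tau q ^^ k) (f n) z = (\<Prod>j<k. c (n - j)) * f (n - k) z"
  using \<open>Im z \<noteq> 0\<close>
proof (induction k arbitrary: z)
  case (Suc k)
  let ?s = "complex_of_real (sqrt q)" and ?P = "\<Prod>j<k. c (n - j)"
  have "Im (?s * z) \<noteq> 0" "Im (z / ?s) \<noteq> 0"
    using \<open>q \<noteq> 0\<close> Suc.prems by simp_all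
  have "(tau q ^^ Suc k) (f n) z = tau q ((tau q ^^ k) (f n)) z"
    by simp
  also have "\<dots> = ?P * tau q (f (n - k)) z"
    unfolding tau_def[of q "(tau q ^^ k) (f n)"] tau_def[of q "f (n - k)"]
      Suc.IH[OF \<open>Im (?s * z) \<noteq> 0\<close>] Suc.IH[OF \<open>Im (z / ?s) \<noteq> 0\<close>]
    by (simp only: right_diff_distrib times_divide_eq_right)
  also have "\<dots> = (\<Prod>j<Suc k. c (n - j)) * f (n - Suc k) z"
    unfolding eigen[OF Suc.prems] by (simp add: ac_simps)
  finally show ?case .
qed simp

lemma sqrt_power_diff_inverse:
  assumes "0 < q"
  shows "sqrt q ^ m - inverse (sqrt q ^ m) = - (q powr (- (real m / 2)) * (1 - q ^ m))"
proof -
  have "sqrt q ^ m = q powr (real m / 2)"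
    using assms by (simp add: powr_half_sqrt[symmetric] powr_power)
  moreover have "q powr (- (real m / 2)) * q ^ m = q powr (real m / 2)"
    using assms by (simp add: powr_realpow[symmetric] powr_add[symmetric])
  ultimately show ?thesis
    by (simp add: right_diff_distrib powr_minus[symmetric])
qed

lemma sum_lessThan_real_diff:
  "k \<le> n \<Longrightarrow> (\<Sum>j<k. real (n - j)) = real k * real n - real k * (real k - 1) / 2"
  by (induction k) (simp_all add: of_nat_diff field_simps)

lemma prod_sqrt_power_diff_inverse:
  assumes "0 < q" "k \<le> n"
  shows "(\<Prod>j<k. sqrt q ^ (n - j) - inverse (sqrt q ^ (n - j)))
       = (-1) ^ k * q powr (real k * (real k - 1) / 4 - real k * real n / 2) * (\<Prod>j<k. 1 - q ^ (n - j))"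
proof -
  have "(\<Prod>j<k. sqrt q ^ (n - j) - inverse (sqrt q ^ (n - j)))
      = (\<Prod>j<k. (-1) * (q powr (- (real (n - j) / 2)) * (1 - q ^ (n - j))))"
    using assms(1) by (simp add: sqrt_power_diff_inverse)
  also have "\<dots> = (-1) ^ k * (\<Prod>j<k. q powr (- (real (n - j) / 2))) * (\<Prod>j<k. 1 - q ^ (n - j))"
    by (simp only: prod.distrib prod_constant card_lessThan mult.assoc)
  also have "(\<Prod>j<k. q powr (- (real (n - j) / 2))) = q powr (\<Sum>j<k. - (real (n - j) / 2))"
    using assms(1) by (simp add: powr_sum)
  also have "(\<Sum>j<k. - (real (n - j) / 2)) = - (\<Sum>j<k. real (n - j)) / 2"
    by (simp only: sum_negf sum_divide_distrib[symmetric] minus_divide_left)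
  also have "\<dots> = real k * (real k - 1) / 4 - real k * real n / 2"
    unfolding sum_lessThan_real_diff[OF assms(2)] by (simp add: field_simps)
  finally show ?thesis .
qed

lemma powr_quarter_square_eq:
  assumes "0 < q"
  shows "q powr (real k ^ 2 / 4) * q powr (real k * (real k - 1) / 4 - real k * real n / 2)
       = (q powr (- real n / 2 + 1 / 4)) ^ k * q ^ (k * (k - 1) div 2)"
proof -
  have "real (k * (k - 1) div 2) = real k * (real k - 1) / 2"
    by (cases k) (simp_all add: real_of_nat_div algebra_simps)
  then have "q ^ (k * (k - 1) div 2) = q powr (real k * (real k - 1) / 2)"
    using assms by (metis powr_realpow)
  then show ?thesis
    using assms by (simp add: powr_power powr_add[symmetric] power2_eq_square field_simps)
qed

lemma tau_series_coefficient_eq: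
  assumes "0 < q" "q < 1" "k \<le> n"
  defines "Q \<equiv> complex_of_real q"
  shows "complex_of_real (q powr (real k ^ 2 / 4)) / qpoch Q Q k
           * (\<Prod>j<k. complex_of_real (sqrt q ^ (n - j) - inverse (sqrt q ^ (n - j))))
       = gauss_binom Q n k * (- complex_of_real (q powr (- real n / 2 + 1 / 4))) ^ k
           * Q ^ (k * (k - 1) div 2)"
proof -
  have "norm Q < 1" using assms by (simp add: Q_def)
  have "(\<Prod>j<k. complex_of_real (sqrt q ^ (n - j) - inverse (sqrt q ^ (n - j))))
      = (-1) ^ k * complex_of_real (q powr (real k * (real k - 1) / 4 - real k * real n / 2))
        * (\<Prod>j<k. 1 - Q ^ (n - j))"
    unfolding of_real_prod[symmetric] prod_sqrt_power_diff_inverse[OF assms(1,3)]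
    by (simp add: Q_def)
  also have "(\<Prod>j<k. 1 - Q ^ (n - j)) = gauss_binom Q n k * qpoch Q Q k"
    by (rule prod_one_minus_power_eq_gauss_binom[OF \<open>norm Q < 1\<close> assms(3)])
  finally show ?thesis
    using qpoch_self_nonzero[OF \<open>norm Q < 1\<close>, of k] powr_quarter_square_eq[OF assms(1), of k n]
    by (simp add: Q_def power_mult_distrib power_minus[of "complex_of_real _"] field_simps
        flip: of_real_mult of_real_power)
qed

lemma funpow_tau_Hcont:
  assumes "0 < q" "q < 1" "Im z \<noteq> 0"
  shows "(tau q ^^ k) (Hcont n q) z
       = (\<Prod>j<k. complex_of_real (sqrt q ^ (n - j) - inverse (sqrt q ^ (n - j)))) * Hcont (n - k) q z"
  using assms by (intro funpow_tau_eigen[where f = "\<lambda>m. Hcont m q"] tau_Hcont) simp_all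

lemma tau_series_term_eq:
  assumes "0 < q" "q < 1" "Im z \<noteq> 0"
  defines "Q \<equiv> complex_of_real q"
  shows "complex_of_real (q powr (real k ^ 2 / 4)) * \<beta> ^ k / qpoch Q Q k * (tau q ^^ k) (Hcont n q) z
       = gauss_binom Q n k * (- (complex_of_real (q powr (- real n / 2 + 1 / 4)) * \<beta>)) ^ k
           * Q ^ (k * (k - 1) div 2) * Hcont (n - k) q z"
proof (cases "k \<le> n")
  case True
  have "complex_of_real (q powr (real k ^ 2 / 4)) * \<beta> ^ k / qpoch Q Q k * (tau q ^^ k) (Hcont n q) z
      = complex_of_real (q powr (real k ^ 2 / 4)) / qpoch Q Q k
        * (\<Prod>j<k. complex_of_real (sqrt q ^ (n - j) - inverse (sqrt q ^ (n - j))))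
        * \<beta> ^ k * Hcont (n - k) q z"
    unfolding funpow_tau_Hcont[OF assms(1-3)] by (simp add: field_simps)
  moreover have "(- (complex_of_real (q powr (- real n / 2 + 1 / 4)) * \<beta>)) ^ k
      = (- complex_of_real (q powr (- real n / 2 + 1 / 4))) ^ k * \<beta> ^ k"
    by (metis minus_mult_left power_mult_distrib)
  ultimately show ?thesis
    unfolding tau_series_coefficient_eq[OF assms(1,2) True, folded Q_def] by (simp only: ac_simps)
next
  case False
  then have "(\<Prod>j<k. complex_of_real (sqrt q ^ (n - j) - inverse (sqrt q ^ (n - j)))) = 0"
    by (intro prod_zero bexI[of _ n]) simp_all
  with False show ?thesis
    by (simp add: funpow_tau_Hcont[OF assms(1-3)] gauss_binom_eq_0)
qed

theorem mainTheorem4: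
  fixes q :: real and \<beta> :: complex and n :: nat and \<theta> :: real
  assumes "0 < q" "q < 1"
    and "sin \<theta> \<noteq> 0"
  shows "(\<lambda>k. complex_of_real (q powr (real k ^ 2 / 4)) * \<beta> ^ k
              / qpoch (complex_of_real q) (complex_of_real q) k
              * ((tau q ^^ k) (Hcont n q)) (cis \<theta>))
         sums Hbig n (complex_of_real (q powr (- real n / 2 + 1 / 4)) * \<beta>) q (cis \<theta>)"
proof -
  define a where "a = complex_of_real (q powr (- real n / 2 + 1 / 4)) * \<beta>"
  define c where "c k = gauss_binom (complex_of_real q) n k * (- a) ^ k
      * complex_of_real q ^ (k * (k - 1) div 2) * Hcont (n - k) q (cis \<theta>)" for k
  have "Im (cis \<theta>) \<noteq> 0" using assms(3) by simp
  then have "(\<lambda>k. complex_of_real (q powr (real k ^ 2 / 4)) * \<beta> ^ k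
      / qpoch (complex_of_real q) (complex_of_real q) k * ((tau q ^^ k) (Hcont n q)) (cis \<theta>)) = c"
    unfolding c_def a_def by (intro ext tau_series_term_eq[OF assms(1,2)])
  moreover have "c sums (\<Sum>k\<le>n. c k)"
    by (rule sums_finite) (auto simp: c_def gauss_binom_eq_0)
  moreover have "(\<Sum>k\<le>n. c k) = Hbig n a q (cis \<theta>)"
    unfolding c_def by (simp add: Hbig_eq_sum_Hcont[OF assms(1,2)])
  ultimately show ?thesis
    unfolding a_def by simp
qed

end
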